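(* Let $G$ be a finite simple unmixed graph. Then the set $F$ of column vectors of the linear syzygy matrix $\mathcal{LS}(I_c(G))$ is a minimal system of generators of the $S$-submodule $S(F)\subseteq S^r$ generated by $F$ if and only if the graph $\mathcal{G}_{I_c(G)}$ has no strong $3$-cycles.
   Context: $G$ has vertices $t_1,\ldots,t_s$, $S=K[t_1,\ldots,t_s]$ with $K$ a field. $G$ is unmixed if all minimal vertex covers (inclusion-minimal sets of vertices meeting every edge) have equal size. Let $C_1,\ldots,C_r$ be the minimal vertex covers; $I_c(G)$ is generated by $u_i=\prod_{t_j\in C_i}t_j$. The graph $\mathcal{G}_{I_c(G)}$ has vertex set $\{C_1,\ldots,C_r\}$, with $\{C_i,C_j\}$ an edge iff $|C_i\cup C_j|=|C_i|+1$. For each edge $\{C_i,C_j\}$ with $i<j$ one has $C_j=(C_i\setminus\{t_{k'}\})\cup\{t_k\}$ for some vertices $t_k,t_{k'}$, and the corresponding column of $\mathcal{LS}(I_c(G))$ is $t_ke'_i-t_{k'}e'_j$, where $e'_1,\ldots,e'_r$ is the standard basis of $S^r$ (so $F$ consists of these vectors). A $3$-cycle $\{C_1,C_2,C_3,C_1\}$ of $\mathcal{G}_{I_c(G)}$ is strong if $C_2\setminus C_1=C_3\setminus C_1$. *)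

theory Defs
  imports Main "HOL-Library.Poly_Mapping"
begin

(* Finite simple graph on the vertex type 'v (vertex set = UNIV, 'v finite):
   edges are 2-element sets of vertices. *)
definition simple_graph :: "'v set set \<Rightarrow> bool" where
  "simple_graph E \<longleftrightarrow> (\<forall>e\<in>E. card e = 2)"

definition vertex_cover :: "'v set set \<Rightarrow> 'v set \<Rightarrow> bool" where
  "vertex_cover E C \<longleftrightarrow> (\<forall>e\<in>E. e \<inter> C \<noteq> {})"

definition min_vertex_cover :: "'v set set \<Rightarrow> 'v set \<Rightarrow> bool" where
  "min_vertex_cover E C \<longleftrightarrow> vertex_cover E C \<and> (\<forall>D. D \<subset> C \<longrightarrow> \<not> vertex_cover E D)"

definition unmixed :: "'v set set \<Rightarrow> bool" where
  "unmixed E \<longleftrightarrow> (\<forall>C D. min_vertex_cover E C \<and> min_vertex_cover E D \<longrightarrow> card C = card D)"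

(* The polynomial ring S = K[t_v : v vertex]: polynomials as finitely supported
   maps from monomials (exponent vectors 'v \<Rightarrow>\<^sub>0 nat) to coefficients. *)
type_synonym ('v, 'k) mpoly = "('v \<Rightarrow>\<^sub>0 nat) \<Rightarrow>\<^sub>0 'k"

definition var :: "'v \<Rightarrow> ('v, 'k::comm_ring_1) mpoly" where
  "var v = Poly_Mapping.single (Poly_Mapping.single v 1) 1"

definition cover_adj :: "'v set \<Rightarrow> 'v set \<Rightarrow> bool" where
  "cover_adj C D \<longleftrightarrow> C \<noteq> D \<and> card (C \<union> D) = card C + 1"

definition has_strong_3cycle :: "'v set set \<Rightarrow> bool" where
  "has_strong_3cycle E \<longleftrightarrow> (\<exists>C1 C2 C3.
     min_vertex_cover E C1 \<and> min_vertex_cover E C2 \<and> min_vertex_cover E C3 \<and>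
     cover_adj C1 C2 \<and> cover_adj C2 C3 \<and> cover_adj C3 C1 \<and>
     C2 - C1 = C3 - C1)"

(* Elements of S^r are represented as functions nat \<Rightarrow> S (components indexed 0..r-1). *)

definition ls_column :: "(nat \<Rightarrow> 'v set) \<Rightarrow> nat \<Rightarrow> nat \<Rightarrow> nat \<Rightarrow> ('v, 'k::comm_ring_1) mpoly" where
  "ls_column cov i j = (\<lambda>l. if l = i then var (the_elem (cov j - cov i))
                            else if l = j then - var (the_elem (cov i - cov j))
                            else 0)"

definition ls_columns :: "(nat \<Rightarrow> 'v set) \<Rightarrow> nat \<Rightarrow> (nat \<Rightarrow> ('v, 'k::comm_ring_1) mpoly) set" where
  "ls_columns cov r = {ls_column cov i j | i j. i < j \<and> j < r \<and> cover_adj (cov i) (cov j)}"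

definition submodule_span :: "(nat \<Rightarrow> 'a::comm_ring_1) set \<Rightarrow> (nat \<Rightarrow> 'a) set" where
  "submodule_span F = {v. \<exists>A a. finite A \<and> A \<subseteq> F \<and> v = (\<lambda>l. \<Sum>f\<in>A. a f * f l)}"

definition minimal_generating_set :: "(nat \<Rightarrow> 'a::comm_ring_1) set \<Rightarrow> bool" where
  "minimal_generating_set F \<longleftrightarrow> (\<forall>F'. F' \<subset> F \<longrightarrow> submodule_span F' \<noteq> submodule_span F)"

end

theory Submission
  imports Defs "HOL-Library.Function_Algebras" "HOL.Modules"
begin

(*
  Since all minimal vertex covers have the same size, adjacent covers differ by a single
  exchange: C_j = (C_i - {y}) \<union> {x}, and the column of the edge {C_i, C_j} has entry t_x in
  row i and -t_y in row j.  If C_p, C_q, C_s with p < q < s form a strong 3-cycle, each of the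
  three covers is reached from the other two by exchanges with the same entering vertex, and
  the column of {C_p, C_s} is the sum of the columns of {C_p, C_q} and {C_q, C_s}.  Without
  strong 3-cycles, distinct neighbours of C_i are entered by distinct vertices, so the
  monomial t_x in row i of the column of {C_i, C_j} occurs in row i of no other column, and
  that column is not in the submodule generated by the others.
  The argument never uses that the graph is simple.
*)

definition vec_scale :: "'a::comm_ring_1 \<Rightarrow> (nat \<Rightarrow> 'a) \<Rightarrow> nat \<Rightarrow> 'a" where
  "vec_scale c v = (\<lambda>l. c * v l)"

interpretation vec: module vec_scale
  by unfold_locales (auto simp: vec_scale_def fun_eq_iff algebra_simps)

lemma sum_fun_apply: "(sum f A :: nat \<Rightarrow> 'a::comm_monoid_add) l = (\<Sum>a\<in>A. f a l)"
  by (induction A rule: infinite_finite_induct) auto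

lemma submodule_span_eq_span: "submodule_span F = vec.span (F :: (nat \<Rightarrow> 'a::comm_ring_1) set)"
  unfolding submodule_span_def vec.span_explicit
  by (auto simp: vec_scale_def sum_fun_apply fun_eq_iff)

lemma minimal_generating_set_iff:
  "minimal_generating_set F \<longleftrightarrow> (\<forall>f\<in>F. f \<notin> submodule_span (F - {f}))"
  unfolding minimal_generating_set_def submodule_span_eq_span
proof (intro iffI ballI allI impI notI)
  fix f assume min: "\<forall>F'\<subset>F. vec.span F' \<noteq> vec.span F"
    and "f \<in> F" and f_span: "f \<in> vec.span (F - {f})"
  have "F \<subseteq> vec.span (F - {f})"
  proof
    fix g assume "g \<in> F"
    then show "g \<in> vec.span (F - {f})"
      using f_span by (cases "g = f") (simp_all add: vec.span_base)
  qed
  moreover have "F - {f} \<subseteq> vec.span F"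
    using vec.span_superset[of F] by blast
  ultimately have "vec.span (F - {f}) = vec.span F"
    by (simp add: vec.span_eq)
  moreover have "F - {f} \<subset> F"
    using \<open>f \<in> F\<close> by blast
  ultimately show False
    using min by blast
next
  fix F' assume indep: "\<forall>f\<in>F. f \<notin> vec.span (F - {f})"
    and "F' \<subset> F" and span_eq: "vec.span F' = vec.span F"
  then obtain f where "f \<in> F" "F' \<subseteq> F - {f}"
    by blast
  have "f \<in> vec.span F'"
    using span_eq vec.span_base[OF \<open>f \<in> F\<close>] by simp
  also have "\<dots> \<subseteq> vec.span (F - {f})"
    using \<open>F' \<subseteq> F - {f}\<close> by (rule vec.span_mono)
  finally show False
    using indep \<open>f \<in> F\<close> by blast
qed

lemma lookup_var_self: "Poly_Mapping.lookup (var x :: ('v, 'k::comm_ring_1) mpoly) (Poly_Mapping.single x 1) = 1"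
  unfolding var_def by simp

lemma var_neq_zero: "var x \<noteq> (0 :: ('v, 'k::comm_ring_1) mpoly)"
  using lookup_var_self[of x] by (metis lookup_zero zero_neq_one)

lemma lookup_mult_var_other:
  assumes "y \<noteq> x"
  shows "Poly_Mapping.lookup (p * var y :: ('v, 'k::comm_ring_1) mpoly) (Poly_Mapping.single x 1) = 0"
proof (rule ccontr)
  assume "Poly_Mapping.lookup (p * var y) (Poly_Mapping.single x 1) \<noteq> 0"
  then have "Poly_Mapping.single x 1 \<in> Poly_Mapping.keys (p * var y)"
    by (simp add: in_keys_iff)
  then have "Poly_Mapping.single x 1 \<in> {m + n | m n. m \<in> Poly_Mapping.keys p \<and>
      n \<in> Poly_Mapping.keys (var y :: ('v, 'k) mpoly)}"
    using keys_mult by (rule subsetD[rotated])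
  then obtain m n where mn: "Poly_Mapping.single x (1::nat) = m + n"
    and "n \<in> Poly_Mapping.keys (var y :: ('v, 'k) mpoly)"
    by blast
  then have "n = Poly_Mapping.single y 1"
    by (auto simp: var_def split: if_splits)
  then have "Poly_Mapping.lookup (Poly_Mapping.single x (1::nat)) y = Poly_Mapping.lookup m y + 1"
    using mn by (simp add: lookup_add)
  with assms show False
    by (simp add: lookup_single)
qed

lemma cover_adj_sym: "card C = card D \<Longrightarrow> cover_adj C D \<Longrightarrow> cover_adj D C"
  unfolding cover_adj_def by (auto simp: Un_commute)

lemma cover_adj_exchange:
  assumes "finite C" "finite D" "card C = card D" "cover_adj C D"
  obtains x y where "D - C = {x}" "C - D = {y}"
proof -
  have "card (C \<union> D) + card (C \<inter> D) = card C + card D"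
    using assms(1,2) by (rule card_Un_Int[symmetric])
  moreover have "card (C \<union> D) = card C + 1"
    using assms(4) unfolding cover_adj_def by simp
  ultimately have "card (D - C) = 1" "card (C - D) = 1"
    using assms by (simp_all add: card_Diff_subset_Int Int_commute)
  then show thesis
    using that by (elim card_1_singletonE) blast
qed

lemma cover_adj_common_entry:
  assumes fin: "finite A" "finite B" "finite C"
    and card: "card B = card A" "card C = card A"
    and adj: "cover_adj A B" "cover_adj A C"
    and "B \<noteq> C" "B - A = C - A"
  shows "cover_adj B C" "A - B = C - B" "A - C = B - C"
proof -
  obtain x y where x: "B - A = {x}" and y: "A - B = {y}"
    using cover_adj_exchange[OF fin(1,2) card(1)[symmetric] adj(1)] .
  obtain y' where x': "C - A = {x}" and y': "A - C = {y'}"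
    using cover_adj_exchange[OF fin(1,3) card(2)[symmetric] adj(2)] x \<open>B - A = C - A\<close> by metis
  have B: "B = insert x (A - {y})" and C: "C = insert x (A - {y'})"
    using x y x' y' by blast+
  with \<open>B \<noteq> C\<close> have "y \<noteq> y'" by blast
  have "x \<notin> A" "y \<in> A" "y' \<in> A"
    using x y y' by auto
  with B C \<open>y \<noteq> y'\<close> have "B \<union> C = insert x A" "C - B = {y}" "B - C = {y'}"
    by auto
  then have "card (B \<union> C) = card B + 1"
    using fin(1) card(1) \<open>x \<notin> A\<close> by simp
  with \<open>B \<noteq> C\<close> show "cover_adj B C"
    unfolding cover_adj_def by simp
  show "A - B = C - B" "A - C = B - C"
    using y y' \<open>C - B = {y}\<close> \<open>B - C = {y'}\<close> by simp_all
qed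

definition strong_3cycle :: "'v set \<Rightarrow> 'v set \<Rightarrow> 'v set \<Rightarrow> bool" where
  "strong_3cycle A B C \<longleftrightarrow> cover_adj A B \<and> cover_adj B C \<and> cover_adj C A \<and> B - A = C - A"

lemma has_strong_3cycle_iff:
  "has_strong_3cycle E \<longleftrightarrow> (\<exists>A B C. min_vertex_cover E A \<and> min_vertex_cover E B \<and>
     min_vertex_cover E C \<and> strong_3cycle A B C)"
  unfolding has_strong_3cycle_def strong_3cycle_def by blast

context
  fixes A B C :: "'v set"
  assumes fin: "finite A" "finite B" "finite C"
    and card: "card B = card A" "card C = card A"
begin

lemma strong_3cycle_if_common_entry:
  assumes "cover_adj A B" "cover_adj A C" "B \<noteq> C" "B - A = C - A"
  shows "strong_3cycle A B C"
proof -
  have "cover_adj B C"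
    using cover_adj_common_entry[OF fin card assms] by simp
  moreover have "cover_adj C A"
    using cover_adj_sym[OF card(2)[symmetric] assms(2)] .
  ultimately show ?thesis
    using assms unfolding strong_3cycle_def by blast
qed

lemma entering_vertex_neq_if_not_strong_3cycle:
  assumes "cover_adj A B" "cover_adj A C" "B \<noteq> C" "\<not> strong_3cycle A B C"
  shows "the_elem (C - A) \<noteq> the_elem (B - A)"
proof
  assume "the_elem (C - A) = the_elem (B - A)"
  moreover obtain x y where "B - A = {x}" "A - B = {y}"
    using cover_adj_exchange[OF fin(1,2) card(1)[symmetric] assms(1)] .
  moreover obtain x' y' where "C - A = {x'}" "A - C = {y'}"
    using cover_adj_exchange[OF fin(1,3) card(2)[symmetric] assms(2)] .
  ultimately have "B - A = C - A"
    by simp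
  with assms show False
    using strong_3cycle_if_common_entry by blast
qed

lemma strong_3cycle_diffs:
  assumes "strong_3cycle A B C"
  shows "A - B = C - B" "A - C = B - C"
proof -
  have AB: "cover_adj A B" and BC: "cover_adj B C" and CA: "cover_adj C A" and "B - A = C - A"
    using assms unfolding strong_3cycle_def by auto
  have "cover_adj A C"
    using cover_adj_sym[OF card(2) CA] .
  moreover have "B \<noteq> C"
    using BC unfolding cover_adj_def by simp
  ultimately show "A - B = C - B" "A - C = B - C"
    using cover_adj_common_entry[OF fin card AB] \<open>B - A = C - A\<close> by blast+
qed

lemma strong_3cycle_swap:
  assumes "strong_3cycle A B C"
  shows "strong_3cycle B A C" "strong_3cycle A C B"
proof -
  have AB: "cover_adj A B" and BC: "cover_adj B C" and CA: "cover_adj C A" and "B - A = C - A"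
    using assms unfolding strong_3cycle_def by auto
  have "cover_adj B A" "cover_adj C B" "cover_adj A C"
    using cover_adj_sym card AB BC CA by metis+
  then show "strong_3cycle B A C" "strong_3cycle A C B"
    using strong_3cycle_diffs[OF assms] \<open>B - A = C - A\<close> CA unfolding strong_3cycle_def by simp_all
qed

end

lemma sorted_triple_wlog:
  fixes p q s :: "'a::linorder"
  assumes "P p q s" "p \<noteq> q" "q \<noteq> s" "p \<noteq> s"
    and swap12: "\<And>a b c. P a b c \<Longrightarrow> P b a c"
    and swap23: "\<And>a b c. P a b c \<Longrightarrow> P a c b"
  obtains a b c where "a < b" "b < c" "P a b c"
proof -
  have "P q p s" "P p s q" "P q s p" "P s p q" "P s q p"
    using assms(1) swap12 swap23 by blast+
  then show thesis
    using that assms(1-4) by (metis linorder_neqE)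
qed

lemma ls_column_cocycle:
  assumes "p \<noteq> q" "q \<noteq> s" "p \<noteq> s"
    and "cov q - cov p = cov s - cov p" "cov p - cov q = cov s - cov q" "cov p - cov s = cov q - cov s"
  shows "(ls_column cov p s :: nat \<Rightarrow> ('v, 'k::comm_ring_1) mpoly) = ls_column cov p q + ls_column cov q s"
  using assms by (auto simp: ls_column_def fun_eq_iff)

lemma ls_column_in_ls_columns:
  "i < j \<Longrightarrow> j < r \<Longrightarrow> cover_adj (cov i) (cov j) \<Longrightarrow> ls_column cov i j \<in> ls_columns cov r"
  unfolding ls_columns_def by blast

lemma ls_columns_not_minimal_if_sum:
  assumes "p < q" "q < s" "s < r"
    and adj: "cover_adj (cov p) (cov q)" "cover_adj (cov q) (cov s)" "cover_adj (cov p) (cov s)"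
    and decomp: "(ls_column cov p s :: nat \<Rightarrow> ('v, 'k::comm_ring_1) mpoly) =
      ls_column cov p q + ls_column cov q s"
  shows "\<not> minimal_generating_set (ls_columns cov r :: (nat \<Rightarrow> ('v, 'k::comm_ring_1) mpoly) set)"
proof -
  let ?F = "ls_columns cov r :: (nat \<Rightarrow> ('v, 'k) mpoly) set"
  let ?f = "ls_column cov p s :: nat \<Rightarrow> ('v, 'k) mpoly"
  have "ls_column cov p q q \<noteq> ?f q" "ls_column cov q s q \<noteq> ?f q"
    using assms(1,2) by (simp_all add: ls_column_def var_neq_zero)
  then have "ls_column cov p q \<noteq> ?f" "ls_column cov q s \<noteq> ?f"
    by auto
  moreover have "ls_column cov p q \<in> ?F" "ls_column cov q s \<in> ?F"
    using assms(1-3) adj(1,2) by (simp_all add: ls_column_in_ls_columns)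
  ultimately have "ls_column cov p q \<in> ?F - {?f}" "ls_column cov q s \<in> ?F - {?f}"
    by simp_all
  then have "ls_column cov p q + ls_column cov q s \<in> vec.span (?F - {?f})"
    by (intro vec.span_add vec.span_base)
  then have "?f \<in> submodule_span (?F - {?f})"
    unfolding submodule_span_eq_span by (simp only: decomp[symmetric])
  moreover have "?f \<in> ?F"
    using assms(1-3) adj(3) by (simp add: ls_column_in_ls_columns)
  ultimately show ?thesis
    unfolding minimal_generating_set_iff by blast
qed

lemma ls_columns_not_minimal_if_strong_3cycle:
  assumes fin: "\<And>i. i < r \<Longrightarrow> finite (cov i)"
    and card: "\<And>i j. i < r \<Longrightarrow> j < r \<Longrightarrow> card (cov i) = card (cov j)"
    and "p < r" "q < r" "s < r" "strong_3cycle (cov p) (cov q) (cov s)"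
  shows "\<not> minimal_generating_set (ls_columns cov r :: (nat \<Rightarrow> ('v, 'k::comm_ring_1) mpoly) set)"
proof -
  define P where "P a b c \<longleftrightarrow> a < r \<and> b < r \<and> c < r \<and> strong_3cycle (cov a) (cov b) (cov c)"
    for a b c
  have "P p q s"
    using assms(3-6) unfolding P_def by simp
  have "cov p \<noteq> cov q" "cov q \<noteq> cov s" "cov s \<noteq> cov p"
    using assms(6) unfolding strong_3cycle_def cover_adj_def by simp_all
  then have "p \<noteq> q" "q \<noteq> s" "p \<noteq> s"
    by auto
  have swap: "P b a c" "P a c b" if "P a b c" for a b c
  proof -
    have lt: "a < r" "b < r" "c < r" and cyc: "strong_3cycle (cov a) (cov b) (cov c)"
      using that unfolding P_def by simp_all
    then show "P b a c" "P a c b"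
      using strong_3cycle_swap[OF fin[OF lt(1)] fin[OF lt(2)] fin[OF lt(3)]
          card[OF lt(2,1)] card[OF lt(3,1)] cyc]
      unfolding P_def by simp_all
  qed
  obtain a b c where "a < b" "b < c" and "P a b c"
    using sorted_triple_wlog[where P = P, OF \<open>P p q s\<close> \<open>p \<noteq> q\<close> \<open>q \<noteq> s\<close> \<open>p \<noteq> s\<close> swap] .
  then have lt: "a < r" "b < r" "c < r" and cyc: "strong_3cycle (cov a) (cov b) (cov c)"
    unfolding P_def by auto
  have adj: "cover_adj (cov a) (cov b)" "cover_adj (cov b) (cov c)" "cover_adj (cov a) (cov c)"
    using cyc cover_adj_sym[OF card[OF lt(3,1)]] unfolding strong_3cycle_def by auto
  have "ls_column cov a c = ls_column cov a b + ls_column cov b c"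
  proof (rule ls_column_cocycle)
    show "a \<noteq> b" "b \<noteq> c" "a \<noteq> c"
      using \<open>a < b\<close> \<open>b < c\<close> by simp_all
    show "cov b - cov a = cov c - cov a"
      using cyc unfolding strong_3cycle_def by simp
    show "cov a - cov b = cov c - cov b" "cov a - cov c = cov b - cov c"
      using strong_3cycle_diffs[OF fin fin fin card card cyc] lt by simp_all
  qed
  then show ?thesis
    using ls_columns_not_minimal_if_sum \<open>a < b\<close> \<open>b < c\<close> lt(3) adj by blast
qed

lemma not_in_submodule_span_by_coefficient:
  fixes f :: "nat \<Rightarrow> ('v, 'k::comm_ring_1) mpoly"
  assumes "Poly_Mapping.lookup (f i) m \<noteq> 0"
    and "\<And>g p. g \<in> G \<Longrightarrow> Poly_Mapping.lookup (p * g i) m = 0"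
  shows "f \<notin> submodule_span G"
proof
  assume "f \<in> submodule_span G"
  then obtain A a where "A \<subseteq> G" "f = (\<lambda>l. \<Sum>g\<in>A. a g * g l)"
    unfolding submodule_span_def by blast
  then have "Poly_Mapping.lookup (f i) m = (\<Sum>g\<in>A. Poly_Mapping.lookup (a g * g i) m)"
    by (simp add: lookup_sum)
  also have "\<dots> = 0"
    using \<open>A \<subseteq> G\<close> assms(2) by (auto intro: sum.neutral)
  finally show False
    using assms(1) by contradiction
qed

lemma lookup_mult_ls_column:
  assumes "i = i' \<Longrightarrow> the_elem (cov j' - cov i') \<noteq> x"
    and "i = j' \<Longrightarrow> the_elem (cov i' - cov j') \<noteq> x"
  shows "Poly_Mapping.lookup (p * ls_column cov i' j' i :: ('v, 'k::comm_ring_1) mpoly)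
      (Poly_Mapping.single x 1) = 0"
  using assms lookup_mult_var_other[of _ x p] unfolding ls_column_def by auto

lemma ls_column_not_in_span_of_others:
  assumes card: "\<And>i j. i < r \<Longrightarrow> j < r \<Longrightarrow> card (cov i) = card (cov j)"
    and distinct_entries: "\<And>i j l. i < r \<Longrightarrow> j < r \<Longrightarrow> l < r \<Longrightarrow> j \<noteq> l \<Longrightarrow>
      cover_adj (cov i) (cov j) \<Longrightarrow> cover_adj (cov i) (cov l) \<Longrightarrow>
      the_elem (cov l - cov i) \<noteq> the_elem (cov j - cov i)"
    and "f \<in> ls_columns cov r"
  shows "(f :: nat \<Rightarrow> ('v, 'k::comm_ring_1) mpoly) \<notin> submodule_span (ls_columns cov r - {f})"
proof -
  obtain i j where ij: "i < j" "j < r" "cover_adj (cov i) (cov j)" and f: "f = ls_column cov i j"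
    using \<open>f \<in> ls_columns cov r\<close> unfolding ls_columns_def by blast
  define x where "x = the_elem (cov j - cov i)"
  have "f i = var x"
    using ij by (simp add: f ls_column_def x_def)
  then have "Poly_Mapping.lookup (f i) (Poly_Mapping.single x 1) = 1"
    by (simp only: lookup_var_self)
  moreover have "Poly_Mapping.lookup (p * g i) (Poly_Mapping.single x 1) = 0"
    if "g \<in> ls_columns cov r - {f}" for g p
  proof -
    have "g \<in> ls_columns cov r"
      using that by simp
    then obtain i' j' where g: "i' < j'" "j' < r" "cover_adj (cov i') (cov j')" "g = ls_column cov i' j'"
      unfolding ls_columns_def by blast
    show ?thesis
      unfolding g(4)
    proof (rule lookup_mult_ls_column)
      assume "i = i'"
      have "j' \<noteq> j"
        using that \<open>i = i'\<close> f g(4) by blast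
      then show "the_elem (cov j' - cov i') \<noteq> x"
        using distinct_entries[of i j j'] \<open>i = i'\<close> g(2,3) ij x_def by simp
    next
      assume "i = j'"
      then have "i' < r" "i < r" "i' \<noteq> j"
        using g(1,2) ij(1) by simp_all
      have "cover_adj (cov i) (cov i')"
        using cover_adj_sym[OF card[OF \<open>i' < r\<close> \<open>i < r\<close>]] g(3) \<open>i = j'\<close> by simp
      then show "the_elem (cov i' - cov j') \<noteq> x"
        using distinct_entries[of i j i'] \<open>i = j'\<close> \<open>i' < r\<close> \<open>i' \<noteq> j\<close> ij x_def by simp
    qed
  qed
  ultimately show ?thesis
    by (intro not_in_submodule_span_by_coefficient) auto
qed

lemma ls_columns_minimal_if_no_strong_3cycle:
  assumes inj: "inj_on cov {..<r}"
    and fin: "\<And>i. i < r \<Longrightarrow> finite (cov i)"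
    and card: "\<And>i j. i < r \<Longrightarrow> j < r \<Longrightarrow> card (cov i) = card (cov j)"
    and no_strong: "\<And>p q s. p < r \<Longrightarrow> q < r \<Longrightarrow> s < r \<Longrightarrow> \<not> strong_3cycle (cov p) (cov q) (cov s)"
  shows "minimal_generating_set (ls_columns cov r :: (nat \<Rightarrow> ('v, 'k::comm_ring_1) mpoly) set)"
proof -
  have distinct_entries: "the_elem (cov l - cov i) \<noteq> the_elem (cov j - cov i)"
    if lt: "i < r" "j < r" "l < r" and "j \<noteq> l"
      and adj: "cover_adj (cov i) (cov j)" "cover_adj (cov i) (cov l)"
    for i j l
  proof (rule entering_vertex_neq_if_not_strong_3cycle[OF fin[OF lt(1)] fin[OF lt(2)] fin[OF lt(3)]
        card[OF lt(2,1)] card[OF lt(3,1)] adj])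
    show "cov j \<noteq> cov l"
      using inj lt \<open>j \<noteq> l\<close> unfolding inj_on_def by blast
    show "\<not> strong_3cycle (cov i) (cov j) (cov l)"
      using no_strong lt by blast
  qed
  show ?thesis
    unfolding minimal_generating_set_iff
  proof
    fix f :: "nat \<Rightarrow> ('v, 'k) mpoly"
    assume "f \<in> ls_columns cov r"
    from ls_column_not_in_span_of_others[where cov = cov and r = r, OF card distinct_entries this]
    show "f \<notin> submodule_span (ls_columns cov r - {f})" .
  qed
qed

lemma ls_columns_minimal_iff:
  assumes "inj_on cov {..<r}"
    and "\<And>i. i < r \<Longrightarrow> finite (cov i)"
    and "\<And>i j. i < r \<Longrightarrow> j < r \<Longrightarrow> card (cov i) = card (cov j)"
  shows "minimal_generating_set (ls_columns cov r :: (nat \<Rightarrow> ('v, 'k::comm_ring_1) mpoly) set)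
    \<longleftrightarrow> \<not> (\<exists>p<r. \<exists>q<r. \<exists>s<r. strong_3cycle (cov p) (cov q) (cov s))"
  using ls_columns_minimal_if_no_strong_3cycle[where cov = cov and r = r]
    ls_columns_not_minimal_if_strong_3cycle[where cov = cov and r = r] assms
  by blast

theorem proposition4p10:
  fixes E :: "('v::finite) set set"
    and cov :: "nat \<Rightarrow> 'v set"
    and r :: nat
  assumes "simple_graph E"
    and "unmixed E"
    and "bij_betw cov {..<r} {C. min_vertex_cover E C}"
  shows "minimal_generating_set (ls_columns cov r :: (nat \<Rightarrow> ('v, 'k::field) mpoly) set)
         \<longleftrightarrow> \<not> has_strong_3cycle E"
proof -
  have inj: "inj_on cov {..<r}" and covers: "cov ` {..<r} = {C. min_vertex_cover E C}"
    using assms(3) unfolding bij_betw_def by simp_all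
  have card: "card (cov i) = card (cov j)" if "i < r" "j < r" for i j
  proof -
    have "min_vertex_cover E (cov i)" "min_vertex_cover E (cov j)"
      using that covers by blast+
    then show ?thesis
      using assms(2) unfolding unmixed_def by blast
  qed
  have "has_strong_3cycle E \<longleftrightarrow> (\<exists>A\<in>cov ` {..<r}. \<exists>B\<in>cov ` {..<r}. \<exists>C\<in>cov ` {..<r}.
      strong_3cycle A B C)"
    unfolding covers has_strong_3cycle_iff by simp
  also have "\<dots> \<longleftrightarrow> (\<exists>p<r. \<exists>q<r. \<exists>s<r. strong_3cycle (cov p) (cov q) (cov s))"
    by (simp add: Bex_def)
  finally have "has_strong_3cycle E \<longleftrightarrow> (\<exists>p<r. \<exists>q<r. \<exists>s<r. strong_3cycle (cov p) (cov q) (cov s))" .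
  with ls_columns_minimal_iff[OF inj _ card] show ?thesis
    by simp
qed

end
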